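(* Let $X$ be an extremally disconnected topological space in which every $\Lambda$-set is open, and let $g,f:X\to\mathbb{R}$ be functions such that $f$ is lower semi-contra-continuous, $g$ is upper semi-contra-continuous, and $g\le f$. Then there exists a contra-continuous function $h:X\to\mathbb{R}$ such that $g\le h\le f$.
   Context: A $\Lambda$-set in $X$ is an intersection of open sets. A function $f:X\to\mathbb{R}$ is upper semi-contra-continuous (resp. lower semi-contra-continuous) if $f^{-1}(-\infty,t)$ (resp. $f^{-1}(t,+\infty)$) is closed in $X$ for every real $t$. A function $h:X\to\mathbb{R}$ is contra-continuous if the preimage of every open subset of $\mathbb{R}$ is closed in $X$. $g\le f$ means $g(x)\le f(x)$ for all $x\in X$. *)

theory Defs
  imports "HOL-Analysis.Analysis"
begin

definition extremally_disconnected :: "'a topology \<Rightarrow> bool" where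
  "extremally_disconnected X \<longleftrightarrow> (\<forall>U. openin X U \<longrightarrow> openin X (X closure_of U))"

text \<open>A Lambda-set is an intersection of open sets (the empty intersection being the whole space).\<close>
definition Lambda_set :: "'a topology \<Rightarrow> 'a set \<Rightarrow> bool" where
  "Lambda_set X A \<longleftrightarrow> (\<exists>\<U>. (\<forall>U\<in>\<U>. openin X U) \<and> A = topspace X \<inter> \<Inter>\<U>)"

definition upper_semi_contra_continuous :: "'a topology \<Rightarrow> ('a \<Rightarrow> real) \<Rightarrow> bool" where
  "upper_semi_contra_continuous X f \<longleftrightarrow> (\<forall>t. closedin X {x \<in> topspace X. f x < t})"

definition lower_semi_contra_continuous :: "'a topology \<Rightarrow> ('a \<Rightarrow> real) \<Rightarrow> bool" where
  "lower_semi_contra_continuous X f \<longleftrightarrow> (\<forall>t. closedin X {x \<in> topspace X. t < f x})"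

definition contra_continuous :: "'a topology \<Rightarrow> ('a \<Rightarrow> real) \<Rightarrow> bool" where
  "contra_continuous X h \<longleftrightarrow> (\<forall>U. open U \<longrightarrow> closedin X {x \<in> topspace X. h x \<in> U})"

end

theory Submission
  imports Defs
begin

text \<open>
  When every \<open>\<Lambda>\<close>-set is open, every point has a least open neighbourhood, so the topology is
  determined by the specialization preorder (\<open>x \<preceq> y\<close> iff \<open>x \<in> closure {y}\<close>): closures are
  unions of closures of points. Lower (upper) semi-contra-continuity of \<open>f\<close> (\<open>g\<close>) makes \<open>f\<close>
  antitone and \<open>g\<close> monotone for \<open>\<preceq>\<close>. Extremal disconnectedness makes "having a common
  upper bound" (a common generalization) an equivalence relation, and \<open>g y \<le> g w \<le> f w \<le> f x\<close>
  whenever \<open>x, y \<preceq> w\<close>. Hence \<open>h x = sup {g y | y equivalent to x}\<close> lies between \<open>g\<close> and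
  \<open>f\<close>; being constant on the equivalence classes, which are down-closed, all its preimages
  are closed.
\<close>

definition Lambda_kernel :: "'a topology \<Rightarrow> 'a \<Rightarrow> 'a set" where
  "Lambda_kernel X x = topspace X \<inter> \<Inter>{U. openin X U \<and> x \<in> U}"

definition common_generalization :: "'a topology \<Rightarrow> ('a \<times> 'a) set" where
  "common_generalization X =
     {(x, y). \<exists>w. x \<in> X closure_of {w} \<and> y \<in> X closure_of {w}}"

lemma mem_common_generalization:
  "(x, y) \<in> common_generalization X \<longleftrightarrow> (\<exists>w. x \<in> X closure_of {w} \<and> y \<in> X closure_of {w})"
  by (simp add: common_generalization_def)

lemma in_closure_of_singleton_topspace:
  "x \<in> X closure_of {y} \<Longrightarrow> y \<in> topspace X"
  by (auto simp: in_closure_of)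

lemma in_closure_of_singleton_self:
  "y \<in> topspace X \<Longrightarrow> y \<in> X closure_of {y}"
  using closure_of_subset[of "{y}" X] by simp

lemma in_closure_of_singleton_trans:
  assumes "x \<in> X closure_of {y}" and "y \<in> X closure_of {z}"
  shows "x \<in> X closure_of {z}"
proof -
  have "X closure_of {y} \<subseteq> X closure_of {z}"
    using assms(2) by (simp add: closure_of_minimal)
  then show ?thesis
    using assms(1) by blast
qed

lemma in_closure_of_singleton_openin:
  "x \<in> X closure_of {y} \<Longrightarrow> openin X U \<Longrightarrow> x \<in> U \<Longrightarrow> y \<in> U"
  by (auto simp: in_closure_of)

lemma openin_Lambda_kernel:
  assumes "\<forall>A. Lambda_set X A \<longrightarrow> openin X A"
  shows "openin X (Lambda_kernel X x)"
proof -
  have "Lambda_set X (Lambda_kernel X x)"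
    unfolding Lambda_set_def Lambda_kernel_def
    by (rule exI[of _ "{U. openin X U \<and> x \<in> U}"]) simp
  then show ?thesis
    using assms by blast
qed

lemma in_Lambda_kernel:
  "x \<in> topspace X \<Longrightarrow> u \<in> Lambda_kernel X x \<longleftrightarrow> x \<in> X closure_of {u}"
  unfolding Lambda_kernel_def in_closure_of by (auto dest: openin_subset)

lemma closure_of_eq_Union_closure_of_singletons:
  assumes Lambda_open: "\<forall>A. Lambda_set X A \<longrightarrow> openin X A"
  shows "X closure_of S = (\<Union>s\<in>S. X closure_of {s})"
proof
  show "(\<Union>s\<in>S. X closure_of {s}) \<subseteq> X closure_of S"
    by (simp add: UN_least closure_of_mono)
next
  show "X closure_of S \<subseteq> (\<Union>s\<in>S. X closure_of {s})"
  proof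
    fix z assume z: "z \<in> X closure_of S"
    then have z_space: "z \<in> topspace X"
      using closure_of_subset_topspace[of X S] by blast
    have "z \<in> Lambda_kernel X z"
      using z_space by (simp add: in_Lambda_kernel in_closure_of_singleton_self)
    then obtain s where "s \<in> S" and "s \<in> Lambda_kernel X z"
      using z openin_Lambda_kernel[OF Lambda_open, of z] unfolding in_closure_of by blast
    then show "z \<in> (\<Union>s\<in>S. X closure_of {s})"
      using in_Lambda_kernel[OF z_space] by blast
  qed
qed

lemma contra_continuous_if_specialization_invariant:
  assumes Lambda_open: "\<forall>A. Lambda_set X A \<longrightarrow> openin X A"
    and invariant: "\<And>x y. x \<in> X closure_of {y} \<Longrightarrow> h x = h y"
  shows "contra_continuous X h"
  unfolding contra_continuous_def
proof (intro allI impI)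
  fix U :: "real set"
  let ?S = "{x \<in> topspace X. h x \<in> U}"
  have "X closure_of ?S \<subseteq> ?S"
  proof
    fix z assume "z \<in> X closure_of ?S"
    then obtain s where "s \<in> ?S" and zs: "z \<in> X closure_of {s}"
      using closure_of_eq_Union_closure_of_singletons[OF Lambda_open] by blast
    moreover have "z \<in> topspace X"
      using zs closure_of_subset_topspace[of X "{s}"] by blast
    ultimately show "z \<in> ?S"
      using invariant[OF zs] by simp
  qed
  then show "closedin X ?S"
    using closure_of_subset_eq by blast
qed

lemma upper_semi_contra_continuous_specialization_mono:
  assumes g: "upper_semi_contra_continuous X g" and xy: "x \<in> X closure_of {y}"
  shows "g x \<le> g y"
proof (rule ccontr)
  let ?C = "{z \<in> topspace X. g z < g x}"
  assume "\<not> g x \<le> g y"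
  then have "{y} \<subseteq> ?C"
    using in_closure_of_singleton_topspace[OF xy] by auto
  moreover have "closedin X ?C"
    using g by (simp add: upper_semi_contra_continuous_def)
  ultimately have "x \<in> ?C"
    using xy closure_of_minimal by blast
  then show False by simp
qed

lemma lower_semi_contra_continuous_specialization_antimono:
  assumes f: "lower_semi_contra_continuous X f" and xy: "x \<in> X closure_of {y}"
  shows "f y \<le> f x"
proof (rule ccontr)
  let ?C = "{z \<in> topspace X. f x < f z}"
  assume "\<not> f y \<le> f x"
  then have "{y} \<subseteq> ?C"
    using in_closure_of_singleton_topspace[OF xy] by auto
  moreover have "closedin X ?C"
    using f by (simp add: lower_semi_contra_continuous_def)
  ultimately have "x \<in> ?C"
    using xy closure_of_minimal by blast
  then show False by simp
qed

lemma trans_common_generalization: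
  assumes ED: "extremally_disconnected X"
    and Lambda_open: "\<forall>A. Lambda_set X A \<longrightarrow> openin X A"
  shows "trans (common_generalization X)"
proof (rule transI)
  fix x y z
  assume "(x, y) \<in> common_generalization X" "(y, z) \<in> common_generalization X"
  then obtain w v where xw: "x \<in> X closure_of {w}" and yw: "y \<in> X closure_of {w}"
    and yv: "y \<in> X closure_of {v}" and zv: "z \<in> X closure_of {v}"
    unfolding mem_common_generalization by blast
  let ?K = "Lambda_kernel X x"
  have x_space: "x \<in> topspace X"
    using xw closure_of_subset_topspace[of X "{w}"] by blast
  have "w \<in> ?K"
    using xw by (simp add: in_Lambda_kernel[OF x_space])
  then have y_in: "y \<in> X closure_of ?K"
    using yw closure_of_mono[of "{w}" ?K X] by blast
  have open_closure: "openin X (X closure_of ?K)"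
    using ED openin_Lambda_kernel[OF Lambda_open] unfolding extremally_disconnected_def by blast
  have "v \<in> X closure_of ?K"
    using yv open_closure y_in by (rule in_closure_of_singleton_openin)
  then obtain u where "u \<in> ?K" and vu: "v \<in> X closure_of {u}"
    using closure_of_eq_Union_closure_of_singletons[OF Lambda_open, of ?K] by blast
  then have "x \<in> X closure_of {u}"
    by (simp add: in_Lambda_kernel[OF x_space])
  moreover have "z \<in> X closure_of {u}"
    using zv vu by (rule in_closure_of_singleton_trans)
  ultimately show "(x, z) \<in> common_generalization X"
    unfolding mem_common_generalization by blast
qed

lemma equiv_common_generalization:
  assumes "extremally_disconnected X" and "\<forall>A. Lambda_set X A \<longrightarrow> openin X A"
  shows "equiv (topspace X) (common_generalization X)"
proof (rule equivI)
  show "common_generalization X \<subseteq> topspace X \<times> topspace X"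
  proof (rule subrelI)
    fix x y assume "(x, y) \<in> common_generalization X"
    then obtain w where "x \<in> X closure_of {w}" "y \<in> X closure_of {w}"
      unfolding mem_common_generalization by blast
    then show "(x, y) \<in> topspace X \<times> topspace X"
      using closure_of_subset_topspace[of X "{w}"] by blast
  qed
  show "refl_on (topspace X) (common_generalization X)"
  proof (rule refl_onI)
    fix x assume "x \<in> topspace X"
    then have "x \<in> X closure_of {x}"
      by (rule in_closure_of_singleton_self)
    then show "(x, x) \<in> common_generalization X"
      unfolding mem_common_generalization by blast
  qed
  show "sym (common_generalization X)"
    unfolding sym_def mem_common_generalization by blast
  show "trans (common_generalization X)"
    using assms by (rule trans_common_generalization)
qed

lemma sandwich_constant_on_equiv_classes:
  fixes f g :: "'a \<Rightarrow> real"
  assumes R: "equiv A R" and bound: "\<And>x y. (x, y) \<in> R \<Longrightarrow> g y \<le> f x"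
  shows "\<exists>h. (\<forall>(x, y)\<in>R. h x = h y) \<and> (\<forall>x\<in>A. g x \<le> h x \<and> h x \<le> f x)"
proof -
  define h where "h x = Sup (g ` R``{x})" for x
  have "h x = h y" if "(x, y) \<in> R" for x y
    using R that by (simp add: h_def equiv_class_eq)
  moreover have "g x \<le> h x \<and> h x \<le> f x" if x: "x \<in> A" for x
  proof
    have x_in_class: "x \<in> R``{x}"
      using R x by (rule equiv_class_self)
    have class_bound: "t \<le> f x" if "t \<in> g ` R``{x}" for t
    proof -
      from that obtain y where "(x, y) \<in> R" and "t = g y"
        by blast
      then show ?thesis
        using bound by simp
    qed
    have bdd: "bdd_above (g ` R``{x})"
      using class_bound by (rule bdd_aboveI)
    have nonempty: "g ` R``{x} \<noteq> {}"
      using x_in_class by blast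
    show "g x \<le> h x"
      unfolding h_def by (rule cSup_upper[OF imageI[OF x_in_class] bdd])
    show "h x \<le> f x"
      unfolding h_def by (rule cSup_least[OF nonempty class_bound])
  qed
  ultimately show ?thesis
    by (intro exI[of _ h]) fast
qed

lemma common_generalization_if_in_closure_of_singleton:
  assumes "x \<in> X closure_of {y}"
  shows "(x, y) \<in> common_generalization X"
proof -
  have "y \<in> X closure_of {y}"
    using assms by (intro in_closure_of_singleton_self in_closure_of_singleton_topspace)
  with assms show ?thesis
    unfolding mem_common_generalization by blast
qed

lemma semi_contra_continuous_le_on_common_generalization:
  assumes f: "lower_semi_contra_continuous X f" and g: "upper_semi_contra_continuous X g"
    and g_le_f: "\<forall>x\<in>topspace X. g x \<le> f x"
    and xy: "(x, y) \<in> common_generalization X"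
  shows "g y \<le> f x"
proof -
  from xy obtain w where xw: "x \<in> X closure_of {w}" and yw: "y \<in> X closure_of {w}"
    unfolding mem_common_generalization by blast
  have "g y \<le> g w"
    using g yw by (rule upper_semi_contra_continuous_specialization_mono)
  also have "\<dots> \<le> f w"
    using g_le_f in_closure_of_singleton_topspace[OF xw] by blast
  also have "\<dots> \<le> f x"
    using f xw by (rule lower_semi_contra_continuous_specialization_antimono)
  finally show ?thesis .
qed

theorem corollary1:
  fixes X :: "'a topology" and f g :: "'a \<Rightarrow> real"
  assumes "extremally_disconnected X"
    and "\<forall>A. Lambda_set X A \<longrightarrow> openin X A"
    and "lower_semi_contra_continuous X f"
    and "upper_semi_contra_continuous X g"
    and "\<forall>x\<in>topspace X. g x \<le> f x"
  shows "\<exists>h. contra_continuous X h \<and> (\<forall>x\<in>topspace X. g x \<le> h x \<and> h x \<le> f x)"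
proof -
  have "g y \<le> f x" if "(x, y) \<in> common_generalization X" for x y
    using assms(3-5) that by (rule semi_contra_continuous_le_on_common_generalization)
  then obtain h where h_const: "\<forall>(x, y)\<in>common_generalization X. h x = h y"
    and h_between: "\<forall>x\<in>topspace X. g x \<le> h x \<and> h x \<le> f x"
    using sandwich_constant_on_equiv_classes[OF equiv_common_generalization[OF assms(1,2)]]
    by blast
  have "contra_continuous X h"
  proof (rule contra_continuous_if_specialization_invariant[OF assms(2)])
    fix x y assume "x \<in> X closure_of {y}"
    then have "(x, y) \<in> common_generalization X"
      by (rule common_generalization_if_in_closure_of_singleton)
    then show "h x = h y"
      using h_const by blast
  qed
  then show ?thesis
    using h_between by blast
qed

end
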